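(* Let $m \ge 1$ be odd, $n\ge1$ with $\gcd(m,4n)=1$, and $r \in \mathbb{Z}$ with $r^{4n}\equiv 1 \bmod m$. Let $G = \langle u,v \mid u^m = v^{4n} = 1,\ vuv^{-1} = u^r\rangle$. Then for $a \ge 2$, $G$ has a quotient isomorphic to $Q_{4a}$ if and only if $a \mid m$ and $r \equiv -1 \bmod a$.
   Context: $Q_{4a} = \langle x,y\mid x^a=y^2, yxy^{-1}=x^{-1}\rangle$ is the generalised quaternion group of order $4a$. *)

theory Defs
  imports "HOL-Algebra.Algebra" "HOL-Number_Theory.Cong"
begin

text \<open>A word is a list of letters (g, e) where e = False
means the generator g and e = True means its inverse.\<close>

type_synonym 'g word = "('g \<times> bool) list"

inductive_set pres_cong :: "('g word \<times> 'g word) set \<Rightarrow> ('g word \<times> 'g word) set"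
  for R :: "('g word \<times> 'g word) set" where
  refl: "(w, w) \<in> pres_cong R"
| sym: "(w, w') \<in> pres_cong R \<Longrightarrow> (w', w) \<in> pres_cong R"
| trans: "(w, w') \<in> pres_cong R \<Longrightarrow> (w', w'') \<in> pres_cong R \<Longrightarrow> (w, w'') \<in> pres_cong R"
| ctxt: "(w, w') \<in> pres_cong R \<Longrightarrow> (p @ w @ q, p @ w' @ q) \<in> pres_cong R"
| cancel: "([(g, e), (g, \<not> e)], []) \<in> pres_cong R"
| rel: "(l, r) \<in> R \<Longrightarrow> (l, r) \<in> pres_cong R"

definition presented_group :: "('g word \<times> 'g word) set \<Rightarrow> 'g word set monoid" where
  "presented_group R =
    \<lparr> carrier = UNIV // pres_cong R,
      monoid.mult = (\<lambda>A B. \<Union>a\<in>A. \<Union>b\<in>B. pres_cong R `` {a @ b}),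
      monoid.one = pres_cong R `` {[]} \<rparr>"

definition wpow :: "'g \<Rightarrow> int \<Rightarrow> 'g word" where
  "wpow g k = (if 0 \<le> k then replicate (nat k) (g, False) else replicate (nat (- k)) (g, True))"

datatype gen2 = Gen1 | Gen2

definition G_group :: "nat \<Rightarrow> nat \<Rightarrow> int \<Rightarrow> gen2 word set monoid" where
  "G_group m n r = presented_group
     { (wpow Gen1 (int m), []),
       (wpow Gen2 (int (4 * n)), []),
       ([(Gen2, False), (Gen1, False), (Gen2, True)], wpow Gen1 r) }"

text \<open>Generalised quaternion group Q_{4a} = \<langle>x, y | x^a = y^2, y x y^-1 = x^-1\<rangle>
with x = Gen1, y = Gen2.\<close>
definition Q_group :: "nat \<Rightarrow> gen2 word set monoid" where
  "Q_group a = presented_group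
     { (wpow Gen1 (int a), wpow Gen2 2),
       ([(Gen2, False), (Gen1, False), (Gen2, True)], wpow Gen1 (-1)) }"

end

theory Submission
  imports Defs
begin

text \<open>
  If \<open>a\<close> divides \<open>m\<close> and \<open>r \<equiv> -1 (mod a)\<close>, then \<open>a\<close> is odd, and \<open>u \<mapsto> x\<^sup>2, v \<mapsto> y\<close> respects
  the relations of \<open>G\<close>, because \<open>x\<close> has order dividing \<open>2a\<close> and \<open>y\<close> inverts \<open>x\<close>; the image
  contains \<open>x = y\<^sup>2 x\<^sup>-\<^sup>2\<^sup>b\<close> for \<open>a = 2b + 1\<close>, so this map is onto \<open>Q\<^sub>4\<^sub>a\<close>.

  Conversely, \<open>Q\<^sub>4\<^sub>a\<close> maps onto the dihedral group of order \<open>2a\<close> (\<open>x\<close> to a rotation \<open>\<rho>\<close> of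
  order \<open>a\<close>, \<open>y\<close> to a reflection \<open>\<sigma>\<close>), so a quotient map onto \<open>Q\<^sub>4\<^sub>a\<close> yields a generating pair
  \<open>U, V\<close> of the dihedral group with \<open>U\<^sup>m = 1\<close> and \<open>V U V\<^sup>-\<^sup>1 = U\<^sup>r\<close>. Since \<open>m\<close> is odd, \<open>U = \<rho>\<^sup>k\<close>
  is a rotation, so \<open>V\<close> is a reflection and generation forces \<open>gcd k a = 1\<close>. Then \<open>U\<^sup>m = 1\<close>
  gives \<open>a | m\<close>, and \<open>U\<^sup>r = V U V\<^sup>-\<^sup>1 = U\<^sup>-\<^sup>1\<close> gives \<open>r \<equiv> -1 (mod a)\<close>.
\<close>

lemma int_pow_numeral: "x [^]\<^bsub>G\<^esub> (numeral k :: int) = x [^]\<^bsub>G\<^esub> (numeral k :: nat)"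
  using int_pow_int[of G x "numeral k"] by simp

context group
begin

lemma conj_nat_pow:
  assumes "x \<in> carrier G" and "g \<in> carrier G"
  shows "g \<otimes> x [^] (k::nat) \<otimes> inv g = (g \<otimes> x \<otimes> inv g) [^] k"
proof -
  have cancel: "inv g \<otimes> (g \<otimes> z) = z" if "z \<in> carrier G" for z
    using assms(2) that by (simp add: m_assoc[symmetric])
  have "(\<lambda>z. g \<otimes> z \<otimes> inv g) \<in> hom G G"
    using assms(2) by (intro homI) (simp_all add: m_assoc cancel)
  from hom_nat_pow[OF this assms(1) is_group is_group] show ?thesis by simp
qed

end

lemma (in group) quotient_iso_iff_onto_hom:
  assumes "group H"
  shows "(\<exists>N. N \<lhd> G \<and> G Mod N \<cong> H) \<longleftrightarrow> (\<exists>h \<in> hom G H. h ` carrier G = carrier H)"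
proof
  assume "\<exists>N. N \<lhd> G \<and> G Mod N \<cong> H"
  then obtain N \<phi> where N: "N \<lhd> G" and \<phi>: "\<phi> \<in> iso (G Mod N) H"
    by (auto simp: is_iso_def)
  interpret N: normal N G by (rule N)
  have "(\<lambda>x. \<phi> (N #> x)) \<in> hom G H"
    using Group.hom_compose[OF N.r_coset_hom_Mod iso_imp_homomorphism[OF \<phi>]] by (simp add: comp_def)
  moreover have "(\<lambda>x. \<phi> (N #> x)) ` carrier G = carrier H"
  proof -
    have "(\<lambda>x. N #> x) ` carrier G = carrier (G Mod N)"
      by (auto simp: FactGroup_def RCOSETS_def)
    moreover have "\<phi> ` carrier (G Mod N) = carrier H"
      using \<phi> by (simp add: iso_def bij_betw_def)
    ultimately show ?thesis
      by (metis image_image)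
  qed
  ultimately show "\<exists>h \<in> hom G H. h ` carrier G = carrier H" by blast
next
  assume "\<exists>h \<in> hom G H. h ` carrier G = carrier H"
  then obtain h where h: "h \<in> hom G H" and onto: "h ` carrier G = carrier H" by blast
  interpret group_hom G H h
    using h assms by (simp add: group_hom_def group_hom_axioms_def is_group)
  show "\<exists>N. N \<lhd> G \<and> G Mod N \<cong> H"
    using normal_kernel FactGroup_iso[OF onto] by blast
qed

section \<open>Presented groups\<close>

abbreviation pres_class :: "('g word \<times> 'g word) set \<Rightarrow> 'g word \<Rightarrow> 'g word set" where
  "pres_class R w \<equiv> pres_cong R `` {w}"

abbreviation pres_gen :: "('g word \<times> 'g word) set \<Rightarrow> 'g \<Rightarrow> 'g word set" where
  "pres_gen R g \<equiv> pres_class R [(g, False)]"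

lemma equiv_pres_cong: "equiv UNIV (pres_cong R)"
  unfolding equiv_def refl_on_def sym_def trans_def
  by (auto intro: pres_cong.refl pres_cong.sym pres_cong.trans)

lemma pres_cong_append:
  assumes "(w, w') \<in> pres_cong R" and "(z, z') \<in> pres_cong R"
  shows "(w @ z, w' @ z') \<in> pres_cong R"
proof -
  have "([] @ w @ z, [] @ w' @ z) \<in> pres_cong R" by (rule pres_cong.ctxt[OF assms(1)])
  moreover have "(w' @ z @ [], w' @ z' @ []) \<in> pres_cong R" by (rule pres_cong.ctxt[OF assms(2)])
  ultimately show ?thesis by (auto intro: pres_cong.trans)
qed

lemma pres_class_eq_iff: "pres_class R w = pres_class R w' \<longleftrightarrow> (w, w') \<in> pres_cong R"
  using eq_equiv_class_iff[OF equiv_pres_cong] by auto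

lemma pres_class_relation: "(l, r) \<in> R \<Longrightarrow> pres_class R l = pres_class R r"
  unfolding pres_class_eq_iff by (rule pres_cong.rel)

lemma carrier_presented_group: "carrier (presented_group R) = range (pres_class R)"
  by (auto simp: presented_group_def quotient_def)

lemma one_presented_group: "\<one>\<^bsub>presented_group R\<^esub> = pres_class R []"
  by (simp add: presented_group_def)

lemma mult_presented_group:
  "pres_class R w \<otimes>\<^bsub>presented_group R\<^esub> pres_class R z = pres_class R (w @ z)"
proof -
  have "pres_class R (w' @ z') = pres_class R (w @ z)"
    if "w' \<in> pres_class R w" "z' \<in> pres_class R z" for w' z'
    using that by (simp add: pres_class_eq_iff pres_cong_append pres_cong.sym)
  moreover have "w \<in> pres_class R w" "z \<in> pres_class R z" by (auto intro: pres_cong.refl)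
  ultimately have "(\<Union>w'\<in>pres_class R w. \<Union>z'\<in>pres_class R z. pres_class R (w' @ z'))
      = pres_class R (w @ z)"
    by blast
  then show ?thesis by (simp add: presented_group_def)
qed

definition word_inv :: "'g word \<Rightarrow> 'g word" where
  "word_inv w = rev (map (\<lambda>(g, e). (g, \<not> e)) w)"

lemma pres_cong_word_inv_append: "(word_inv w @ w, []) \<in> pres_cong R"
proof (induction w)
  case Nil
  then show ?case by (simp add: word_inv_def pres_cong.refl)
next
  case (Cons x w)
  obtain g e where x: "x = (g, e)" by force
  have "(word_inv w @ [(g, \<not> e), (g, \<not> \<not> e)] @ w, word_inv w @ [] @ w) \<in> pres_cong R"
    by (rule pres_cong.ctxt[OF pres_cong.cancel])
  then show ?case using Cons by (auto simp: word_inv_def x intro: pres_cong.trans)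
qed

lemma group_presented_group: "group (presented_group R)"
proof (rule groupI)
  fix x
  assume "x \<in> carrier (presented_group R)"
  then obtain w where "x = pres_class R w" by (auto simp: carrier_presented_group)
  then show "\<exists>y\<in>carrier (presented_group R). y \<otimes>\<^bsub>presented_group R\<^esub> x = \<one>\<^bsub>presented_group R\<^esub>"
    by (intro bexI[of _ "pres_class R (word_inv w)"])
      (auto simp: mult_presented_group one_presented_group pres_class_eq_iff
        pres_cong_word_inv_append carrier_presented_group)
qed (auto simp: carrier_presented_group mult_presented_group one_presented_group)

lemma pres_class_letter:
  "pres_class R [(g, e)] =
     (if e then inv\<^bsub>presented_group R\<^esub> (pres_gen R g) else pres_gen R g)"
proof -
  interpret P: group "presented_group R" by (rule group_presented_group)
  have "inv\<^bsub>presented_group R\<^esub> (pres_gen R g) = pres_class R [(g, True)]"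
    by (rule P.inv_equality) (auto simp: mult_presented_group one_presented_group
        pres_class_eq_iff carrier_presented_group intro: pres_cong.cancel[of g True, simplified])
  then show ?thesis by simp
qed

fun eval_word :: "('h, 'm) monoid_scheme \<Rightarrow> ('g \<Rightarrow> 'h) \<Rightarrow> 'g word \<Rightarrow> 'h" where
  "eval_word H f [] = \<one>\<^bsub>H\<^esub>"
| "eval_word H f ((g, e) # w) = (if e then inv\<^bsub>H\<^esub> (f g) else f g) \<otimes>\<^bsub>H\<^esub> eval_word H f w"

context group
begin

lemma eval_word_closed: "(\<And>x. f x \<in> carrier G) \<Longrightarrow> eval_word G f w \<in> carrier G"
  by (induction w) auto

lemma eval_word_append:
  "(\<And>x. f x \<in> carrier G) \<Longrightarrow> eval_word G f (w @ z) = eval_word G f w \<otimes> eval_word G f z"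
  by (induction w) (auto simp: eval_word_closed m_assoc)

lemma eval_word_conj:
  "(\<And>x. f x \<in> carrier G) \<Longrightarrow> eval_word G f [(h, False), (g, False), (h, True)] = f h \<otimes> f g \<otimes> inv (f h)"
  by (auto simp: m_assoc)

lemma eval_word_replicate:
  assumes "f g \<in> carrier G"
  shows "eval_word G f (replicate j (g, e)) = (if e then inv (f g) else f g) [^] j"
proof -
  define z where "z = (if e then inv (f g) else f g)"
  have z: "z \<in> carrier G" using assms by (simp add: z_def)
  have "eval_word G f (replicate j (g, e)) = z [^] j"
  proof (induction j)
    case (Suc j)
    have "eval_word G f (replicate (Suc j) (g, e)) = z \<otimes> z [^] j"
      by (simp add: Suc.IH z_def)
    also have "\<dots> = z [^] Suc j"
      using z by (rule nat_pow_Suc2[symmetric])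
    finally show ?case .
  qed simp
  then show ?thesis by (simp add: z_def)
qed

lemma eval_word_wpow:
  assumes "\<And>x. f x \<in> carrier G"
  shows "eval_word G f (wpow g k) = f g [^] k"
proof (cases "0 \<le> k")
  case True
  then show ?thesis
    using assms by (simp add: wpow_def eval_word_replicate)
next
  case False
  then have "eval_word G f (wpow g k) = inv (f g) [^] nat (- k)"
    using assms by (simp add: wpow_def eval_word_replicate)
  also have "\<dots> = inv (f g [^] (- k))"
    using False assms by (simp add: int_pow_inv)
  also have "\<dots> = f g [^] k"
    using assms int_pow_neg[of "f g" "- k"] by simp
  finally show ?thesis .
qed

lemma eval_word_pres_cong:
  assumes f: "\<And>x. f x \<in> carrier G" and R: "\<forall>(l, r) \<in> R. eval_word G f l = eval_word G f r"
    and w: "(w, w') \<in> pres_cong R"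
  shows "eval_word G f w = eval_word G f w'"
  using w
proof (induction rule: pres_cong.induct)
  case (ctxt w w' p q)
  then show ?case using f by (simp add: eval_word_append)
next
  case (cancel g e)
  have "f g \<in> carrier G" using f by auto
  then show ?case by auto
qed (use R in auto)

lemma eval_word_in_generate: "(\<And>x. f x \<in> carrier G) \<Longrightarrow> eval_word G f w \<in> generate G (range f)"
proof (induction w)
  case Nil
  then show ?case by (simp add: generate.one)
next
  case (Cons x w)
  obtain g e where x: "x = (g, e)" by force
  have "(if e then inv (f g) else f g) \<in> generate G (range f)"
    by (simp add: generate.incl generate.inv)
  from generate.eng[OF this Cons.IH[OF Cons.prems]] show ?case by (simp add: x)
qed

end

lemma eval_word_pres_gen: "eval_word (presented_group R) (pres_gen R) w = pres_class R w"
proof (induction w)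
  case Nil
  then show ?case by (simp add: one_presented_group)
next
  case (Cons x w)
  obtain g e where x: "x = (g, e)" by force
  have "eval_word (presented_group R) (pres_gen R) (x # w) =
      (if e then inv\<^bsub>presented_group R\<^esub> (pres_gen R g) else pres_gen R g)
        \<otimes>\<^bsub>presented_group R\<^esub> pres_class R w"
    by (simp only: x eval_word.simps Cons.IH)
  also have "\<dots> = pres_class R [(g, e)] \<otimes>\<^bsub>presented_group R\<^esub> pres_class R w"
    by (simp only: pres_class_letter[symmetric])
  finally show ?case by (simp add: mult_presented_group x)
qed

lemma pres_class_wpow: "pres_class R (wpow g k) = pres_gen R g [^]\<^bsub>presented_group R\<^esub> k"
proof -
  have "\<And>x. pres_gen R x \<in> carrier (presented_group R)"
    by (simp add: carrier_presented_group)
  from group.eval_word_wpow[OF group_presented_group, where f = "pres_gen R", OF this] show ?thesis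
    by (simp add: eval_word_pres_gen)
qed

lemma pres_class_conj:
  "pres_class R [(h, False), (g, False), (h, True)] =
     pres_gen R h \<otimes>\<^bsub>presented_group R\<^esub> pres_gen R g \<otimes>\<^bsub>presented_group R\<^esub>
       inv\<^bsub>presented_group R\<^esub> pres_gen R h"
proof -
  have "\<And>x. pres_gen R x \<in> carrier (presented_group R)"
    by (simp add: carrier_presented_group)
  from group.eval_word_conj[OF group_presented_group, where f = "pres_gen R", OF this] show ?thesis
    by (simp only: eval_word_pres_gen)
qed

lemma generate_presented_group:
  "generate (presented_group R) (range (pres_gen R)) = carrier (presented_group R)"
proof -
  interpret group "presented_group R" by (rule group_presented_group)
  have gens: "pres_gen R g \<in> carrier (presented_group R)" for g
    by (simp add: carrier_presented_group)
  show ?thesis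
  proof
    show "generate (presented_group R) (range (pres_gen R)) \<subseteq> carrier (presented_group R)"
      using gens generate_in_carrier[of "range (pres_gen R)"] by auto
    show "carrier (presented_group R) \<subseteq> generate (presented_group R) (range (pres_gen R))"
      using eval_word_in_generate[of "pres_gen R", OF gens]
      by (auto simp: carrier_presented_group eval_word_pres_gen)
  qed
qed

lemma hom_image_presented_group:
  assumes "group H" and "h \<in> hom (presented_group R) H"
  shows "h ` carrier (presented_group R) = generate H (range (\<lambda>g. h (pres_gen R g)))"
proof -
  interpret group_hom "presented_group R" H h
    using assms group_presented_group by (simp add: group_hom_def group_hom_axioms_def)
  have "range (pres_gen R) \<subseteq> carrier (presented_group R)"
    by (auto simp: carrier_presented_group)
  from generate_img[OF this] show ?thesis
    by (simp add: generate_presented_group image_image)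
qed

definition eval_class :: "('h, 'm) monoid_scheme \<Rightarrow> ('g \<Rightarrow> 'h) \<Rightarrow> 'g word set \<Rightarrow> 'h" where
  "eval_class H f W = the_elem (eval_word H f ` W)"

context group
begin

lemma eval_class_pres_class:
  assumes "\<And>x. f x \<in> carrier G" and "\<forall>(l, r) \<in> R. eval_word G f l = eval_word G f r"
  shows "eval_class G f (pres_class R w) = eval_word G f w"
proof -
  have "eval_word G f ` pres_class R w = {eval_word G f w}"
    using eval_word_pres_cong[OF assms] by (auto intro: pres_cong.refl pres_cong.sym)
  then show ?thesis by (simp add: eval_class_def)
qed

theorem von_dyck:
  assumes f: "\<And>x. f x \<in> carrier G" and R: "\<forall>(l, r) \<in> R. eval_word G f l = eval_word G f r"
  shows "eval_class G f \<in> hom (presented_group R) G"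
    and "eval_class G f (pres_gen R g) = f g"
proof -
  note eval = eval_class_pres_class[OF assms]
  show "eval_class G f \<in> hom (presented_group R) G"
    by (rule homI) (auto simp: carrier_presented_group mult_presented_group eval
        eval_word_closed[OF f] eval_word_append[OF f])
  show "eval_class G f (pres_gen R g) = f g"
    using f by (auto simp: eval)
qed

end

section \<open>Quaternion relations\<close>

context group
begin

lemma quaternion_relations_orders:
  fixes a :: nat
  assumes x: "x \<in> carrier G" and y: "y \<in> carrier G"
    and pow: "x [^] a = y [^] (2::nat)" and conj: "y \<otimes> x \<otimes> inv y = inv x"
  shows "x [^] (2 * a) = \<one>" and "y [^] (4::nat) = \<one>"
proof -
  \<comment> \<open>\<open>y\<close> commutes with \<open>y\<^sup>2 = x\<^sup>a\<close> but inverts \<open>x\<close>, so \<open>x\<^sup>a\<close> is its own inverse.\<close>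
  have "y \<otimes> y [^] (2::nat) \<otimes> inv y = y [^] (2::nat)"
    using y by (simp add: numeral_2_eq_2 m_assoc)
  then have "x [^] a = inv x [^] a"
    using conj_nat_pow[OF x y, of a] by (simp add: pow conj)
  also have "\<dots> = inv (x [^] a)"
    using x by (rule nat_pow_inv)
  finally have self_inverse: "inv (x [^] a) = x [^] a" ..
  have "x [^] (2 * a) = x [^] a \<otimes> x [^] a"
    using x by (simp add: mult_2 nat_pow_mult)
  also have "\<dots> = x [^] a \<otimes> inv (x [^] a)"
    by (simp only: self_inverse)
  also have "\<dots> = \<one>"
    using x by simp
  finally show x_order: "x [^] (2 * a) = \<one>" .
  have "y [^] (4::nat) = y [^] (2::nat) \<otimes> y [^] (2::nat)"
    using y by (simp add: nat_pow_mult)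
  also have "\<dots> = x [^] (2 * a)"
    using x by (simp add: pow[symmetric] nat_pow_mult mult_2)
  finally show "y [^] (4::nat) = \<one>"
    using x_order by simp
qed

lemma quaternion_square_relations:
  fixes a m n :: nat
  assumes x: "x \<in> carrier G" and y: "y \<in> carrier G"
    and pow: "x [^] a = y [^] (2::nat)" and conj: "y \<otimes> x \<otimes> inv y = inv x"
    and "a dvd m" and "[r = - 1] (mod int a)"
  shows "(x [^] (2::nat)) [^] m = \<one>" and "y [^] (4 * n) = \<one>"
    and "y \<otimes> x [^] (2::nat) \<otimes> inv y = (x [^] (2::nat)) [^] r"
proof -
  note orders = quaternion_relations_orders[OF x y pow conj]
  have ord_dvd: "ord x dvd 2 * a"
    using orders(1) x by (simp add: pow_eq_id)
  then have "ord x dvd 2 * m"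
    using \<open>a dvd m\<close> by (meson dvd_trans mult_dvd_mono dvd_refl)
  then show "(x [^] (2::nat)) [^] m = \<one>"
    using x by (simp add: nat_pow_pow pow_eq_id)
  show "y [^] (4 * n) = \<one>"
    using orders(2) y by (simp add: nat_pow_pow[symmetric])
  obtain s where "r + 1 = int a * s"
    using \<open>[r = - 1] (mod int a)\<close> by (auto simp: cong_iff_dvd_diff dvd_def)
  then have "2 * r - (- 2) = int (2 * a) * s" by simp
  then have "int (ord x) dvd 2 * r - (- 2)"
    using ord_dvd by (metis dvd_mult2 int_dvd_int_iff)
  then have period: "x [^] (- 2 :: int) = x [^] (2 * r)"
    using x by (simp add: int_pow_eq)
  have "y \<otimes> x [^] (2::nat) \<otimes> inv y = inv (x [^] (2::nat))"
    using x y by (simp add: conj_nat_pow conj nat_pow_inv)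
  also have "\<dots> = x [^] (- 2 :: int)"
    using int_pow_neg_int[OF x, of 2] by simp
  also have "\<dots> = (x [^] (2::nat)) [^] r"
    using x by (simp add: period int_pow_pow int_pow_numeral[symmetric])
  finally show "y \<otimes> x [^] (2::nat) \<otimes> inv y = (x [^] (2::nat)) [^] r" .
qed

lemma odd_pow_mem_generate_square:
  fixes a :: nat
  assumes x: "x \<in> carrier G" and y: "y \<in> carrier G"
    and "odd a" and pow: "x [^] a = y [^] (2::nat)"
  shows "x \<in> generate G {x [^] (2::nat), y}"
proof -
  let ?S = "generate G {x [^] (2::nat), y}"
  have S: "subgroup ?S G"
    using x y by (intro generate_is_subgroup) auto
  obtain b where "a = 2 * b + 1"
    using \<open>odd a\<close> by (rule oddE)
  then have "int a + - 2 * int b = 1"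
    by simp
  then have "x = x [^] (int a + - 2 * int b)"
    using x by simp
  also have "\<dots> = x [^] int a \<otimes> x [^] (- 2 * int b)"
    using x by (rule int_pow_mult)
  also have "\<dots> = y [^] (2::int) \<otimes> (x [^] (2::nat)) [^] (- int b)"
    using x by (simp add: int_pow_pow int_pow_int pow int_pow_numeral[symmetric])
  also have "\<dots> \<in> ?S"
    using S by (intro subgroup.m_closed subgroup_int_pow_closed) (auto intro: generate.incl)
  finally show ?thesis .
qed

end

section \<open>The presentations of \<open>G\<close> and \<open>Q\<^sub>4\<^sub>a\<close>\<close>

lemma range_gen2: "range f = {f Gen1, f Gen2}"
proof -
  have "UNIV = {Gen1, Gen2}" using gen2.exhaust by auto
  then have "range f = f ` {Gen1, Gen2}" by (rule arg_cong)
  then show ?thesis by simp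
qed

definition G_rels :: "nat \<Rightarrow> nat \<Rightarrow> int \<Rightarrow> (gen2 word \<times> gen2 word) set" where
  "G_rels m n r = { (wpow Gen1 (int m), []), (wpow Gen2 (int (4 * n)), []),
     ([(Gen2, False), (Gen1, False), (Gen2, True)], wpow Gen1 r) }"

definition Q_rels :: "nat \<Rightarrow> (gen2 word \<times> gen2 word) set" where
  "Q_rels a = { (wpow Gen1 (int a), wpow Gen2 2),
     ([(Gen2, False), (Gen1, False), (Gen2, True)], wpow Gen1 (-1)) }"

lemma G_group_presentation: "G_group m n r = presented_group (G_rels m n r)"
  by (simp add: G_group_def G_rels_def)

lemma Q_group_presentation: "Q_group a = presented_group (Q_rels a)"
  by (simp add: Q_group_def Q_rels_def)

lemma hom_G_group_relations:
  assumes "group H" and "h \<in> hom (G_group m n r) H"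
  defines "U \<equiv> h (pres_gen (G_rels m n r) Gen1)" and "V \<equiv> h (pres_gen (G_rels m n r) Gen2)"
  shows "U [^]\<^bsub>H\<^esub> m = \<one>\<^bsub>H\<^esub>" and "V \<otimes>\<^bsub>H\<^esub> U \<otimes>\<^bsub>H\<^esub> inv\<^bsub>H\<^esub> V = U [^]\<^bsub>H\<^esub> r"
proof -
  let ?R = "G_rels m n r" and ?P = "presented_group (G_rels m n r)"
  interpret P: group ?P by (rule group_presented_group)
  interpret h: group_hom ?P H h
    using assms by (simp add: group_hom_def group_hom_axioms_def G_group_presentation)
  have gens: "pres_gen ?R g \<in> carrier ?P" for g
    by (simp add: carrier_presented_group)
  have "(wpow Gen1 (int m), []) \<in> ?R"
    by (simp add: G_rels_def)
  from pres_class_relation[OF this] have "pres_gen ?R Gen1 [^]\<^bsub>?P\<^esub> m = \<one>\<^bsub>?P\<^esub>"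
    by (simp add: pres_class_wpow one_presented_group int_pow_int)
  then have "h (pres_gen ?R Gen1 [^]\<^bsub>?P\<^esub> m) = h \<one>\<^bsub>?P\<^esub>"
    by (rule arg_cong)
  then show "U [^]\<^bsub>H\<^esub> m = \<one>\<^bsub>H\<^esub>"
    by (simp add: U_def gens h.hom_nat_pow)
  have "([(Gen2, False), (Gen1, False), (Gen2, True)], wpow Gen1 r) \<in> ?R"
    by (simp add: G_rels_def)
  from pres_class_relation[OF this]
  have "pres_gen ?R Gen2 \<otimes>\<^bsub>?P\<^esub> pres_gen ?R Gen1 \<otimes>\<^bsub>?P\<^esub> inv\<^bsub>?P\<^esub> pres_gen ?R Gen2
      = pres_gen ?R Gen1 [^]\<^bsub>?P\<^esub> r"
    by (simp add: pres_class_wpow pres_class_conj)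
  then have "h (pres_gen ?R Gen2 \<otimes>\<^bsub>?P\<^esub> pres_gen ?R Gen1 \<otimes>\<^bsub>?P\<^esub> inv\<^bsub>?P\<^esub> pres_gen ?R Gen2)
      = h (pres_gen ?R Gen1 [^]\<^bsub>?P\<^esub> r)"
    by (rule arg_cong)
  then show "V \<otimes>\<^bsub>H\<^esub> U \<otimes>\<^bsub>H\<^esub> inv\<^bsub>H\<^esub> V = U [^]\<^bsub>H\<^esub> r"
    by (simp add: U_def V_def gens h.hom_int_pow)
qed

lemma Q_group_relations:
  fixes a :: nat
  defines "x \<equiv> pres_gen (Q_rels a) Gen1" and "y \<equiv> pres_gen (Q_rels a) Gen2"
  shows "x [^]\<^bsub>Q_group a\<^esub> a = y [^]\<^bsub>Q_group a\<^esub> (2::nat)"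
    and "y \<otimes>\<^bsub>Q_group a\<^esub> x \<otimes>\<^bsub>Q_group a\<^esub> inv\<^bsub>Q_group a\<^esub> y = inv\<^bsub>Q_group a\<^esub> x"
proof -
  let ?R = "Q_rels a" and ?P = "presented_group (Q_rels a)"
  interpret P: group ?P by (rule group_presented_group)
  have "(wpow Gen1 (int a), wpow Gen2 2) \<in> ?R"
    by (simp add: Q_rels_def)
  from pres_class_relation[OF this] show "x [^]\<^bsub>Q_group a\<^esub> a = y [^]\<^bsub>Q_group a\<^esub> (2::nat)"
    by (simp add: pres_class_wpow int_pow_int int_pow_numeral x_def y_def Q_group_presentation)
  have "([(Gen2, False), (Gen1, False), (Gen2, True)], wpow Gen1 (-1)) \<in> ?R"
    by (simp add: Q_rels_def)
  from pres_class_relation[OF this]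
  show "y \<otimes>\<^bsub>Q_group a\<^esub> x \<otimes>\<^bsub>Q_group a\<^esub> inv\<^bsub>Q_group a\<^esub> y = inv\<^bsub>Q_group a\<^esub> x"
    by (simp add: pres_class_wpow pres_class_conj P.int_pow_neg carrier_presented_group x_def y_def
        Q_group_presentation)
qed

lemma hom_from_G_group:
  assumes "group H" and U: "U \<in> carrier H" and V: "V \<in> carrier H"
    and "U [^]\<^bsub>H\<^esub> m = \<one>\<^bsub>H\<^esub>" and "V [^]\<^bsub>H\<^esub> (4 * n) = \<one>\<^bsub>H\<^esub>"
    and "V \<otimes>\<^bsub>H\<^esub> U \<otimes>\<^bsub>H\<^esub> inv\<^bsub>H\<^esub> V = U [^]\<^bsub>H\<^esub> r"
  obtains h where "h \<in> hom (G_group m n r) H"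
    and "h (pres_gen (G_rels m n r) Gen1) = U" and "h (pres_gen (G_rels m n r) Gen2) = V"
proof -
  interpret H: group H by fact
  define f where "f g = (case g of Gen1 \<Rightarrow> U | Gen2 \<Rightarrow> V)" for g
  have f: "f g \<in> carrier H" for g
    by (cases g) (simp_all add: f_def U V)
  have "V [^]\<^bsub>H\<^esub> (4 * int n) = \<one>\<^bsub>H\<^esub>"
    using assms int_pow_int[of H V "4 * n"] by simp
  then have "\<forall>(l, l') \<in> G_rels m n r. eval_word H f l = eval_word H f l'"
    using assms by (auto simp: G_rels_def H.eval_word_wpow[OF f] H.eval_word_conj[OF f] f_def
        int_pow_int H.m_assoc)
  from H.von_dyck[OF f this] show thesis
    using that by (simp add: G_group_presentation f_def)
qed

lemma hom_from_Q_group: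
  assumes "group H" and x: "x \<in> carrier H" and y: "y \<in> carrier H"
    and "x [^]\<^bsub>H\<^esub> a = y [^]\<^bsub>H\<^esub> (2::nat)" and "y \<otimes>\<^bsub>H\<^esub> x \<otimes>\<^bsub>H\<^esub> inv\<^bsub>H\<^esub> y = inv\<^bsub>H\<^esub> x"
  obtains h where "h \<in> hom (Q_group a) H"
    and "h (pres_gen (Q_rels a) Gen1) = x" and "h (pres_gen (Q_rels a) Gen2) = y"
proof -
  interpret H: group H by fact
  define f where "f g = (case g of Gen1 \<Rightarrow> x | Gen2 \<Rightarrow> y)" for g
  have f: "f g \<in> carrier H" for g
    by (cases g) (simp_all add: f_def x y)
  have "\<forall>(l, l') \<in> Q_rels a. eval_word H f l = eval_word H f l'"
    using assms by (auto simp: Q_rels_def H.eval_word_wpow[OF f] H.eval_word_conj[OF f] f_def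
        int_pow_int int_pow_numeral H.int_pow_neg H.m_assoc)
  from H.von_dyck[OF f this] show thesis
    using that by (simp add: Q_group_presentation f_def)
qed

lemma G_group_onto_Q_group:
  assumes "odd m" and "a dvd m" and "[r = - 1] (mod int a)"
  shows "\<exists>h \<in> hom (G_group m n r) (Q_group a). h ` carrier (G_group m n r) = carrier (Q_group a)"
proof -
  let ?Q = "Q_group a"
  interpret Q: group ?Q
    by (simp add: Q_group_presentation group_presented_group)
  define x where "x = pres_gen (Q_rels a) Gen1"
  define y where "y = pres_gen (Q_rels a) Gen2"
  have x: "x \<in> carrier ?Q" and y: "y \<in> carrier ?Q"
    by (simp_all add: x_def y_def Q_group_presentation carrier_presented_group)
  note rels = Q_group_relations[of a, folded x_def y_def]
  obtain h where h: "h \<in> hom (G_group m n r) ?Q"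
    and h_gens: "h (pres_gen (G_rels m n r) Gen1) = x [^]\<^bsub>?Q\<^esub> (2::nat)"
      "h (pres_gen (G_rels m n r) Gen2) = y"
    using hom_from_G_group[OF Q.is_group _ y Q.quaternion_square_relations[OF x y rels assms(2,3)]] x
    by auto
  let ?S = "generate ?Q {x [^]\<^bsub>?Q\<^esub> (2::nat), y}"
  have S: "subgroup ?S ?Q"
    using x y by (intro Q.generate_is_subgroup) auto
  have "odd a"
    using \<open>odd m\<close> \<open>a dvd m\<close> by (metis dvd_trans even_mult_iff dvd_triv_left)
  with x y rels(1) have "{x, y} \<subseteq> ?S"
    by (auto intro: Q.odd_pow_mem_generate_square generate.incl)
  then have "generate ?Q {x, y} \<subseteq> ?S"
    using S by (rule Q.generate_subgroup_incl)
  moreover have "generate ?Q {x, y} = carrier ?Q"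
    using generate_presented_group[of "Q_rels a"] by (simp add: Q_group_presentation range_gen2 x_def y_def)
  ultimately have "?S = carrier ?Q"
    using S by (simp add: subgroup.subset subset_antisym)
  moreover have "h ` carrier (G_group m n r) = ?S"
    using hom_image_presented_group[OF Q.is_group h[unfolded G_group_presentation]]
    by (simp add: G_group_presentation range_gen2 h_gens)
  ultimately show ?thesis
    using h by blast
qed

section \<open>Dihedral groups\<close>

lemma dvd_mod_diff_iff: "(d::int) dvd m \<Longrightarrow> d dvd x mod m - y \<longleftrightarrow> d dvd x - y"
proof -
  assume "d dvd m"
  moreover have "x mod m - y = (x - y) + m * (- (x div m))"
    by (simp add: algebra_simps minus_div_mult_eq_mod[symmetric])
  ultimately show ?thesis
    by (metis dvd_add_left_iff dvd_mult2)
qed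

text \<open>The pair \<open>(i, s)\<close> stands for \<open>\<rho>\<^sup>i \<sigma>\<^sup>s\<close>, with \<open>\<rho>\<close> a rotation of order \<open>a\<close> and \<open>\<sigma>\<close> a reflection.\<close>

definition dihedral :: "nat \<Rightarrow> (int \<times> bool) monoid" where
  "dihedral a = \<lparr>carrier = {0..<int a} \<times> UNIV,
     monoid.mult = (\<lambda>(i, s) (j, t). ((if s then i - j else i + j) mod int a, s \<noteq> t)),
     one = (0, False)\<rparr>"

lemma carrier_dihedral: "carrier (dihedral a) = {0..<int a} \<times> UNIV"
  by (simp add: dihedral_def)

lemma one_dihedral: "\<one>\<^bsub>dihedral a\<^esub> = (0, False)"
  by (simp add: dihedral_def)

lemma mult_dihedral [simp]:
  "(i, s) \<otimes>\<^bsub>dihedral a\<^esub> (j, t) = ((if s then i - j else i + j) mod int a, s \<noteq> t)"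
  by (simp add: dihedral_def)

lemma group_dihedral:
  assumes "0 < a"
  shows "group (dihedral a)"
proof (rule groupI)
  fix x y z
  assume "x \<in> carrier (dihedral a)" "y \<in> carrier (dihedral a)" "z \<in> carrier (dihedral a)"
  obtain i s j t k u where "x = (i, s)" "y = (j, t)" "z = (k, u)"
    by (metis prod.exhaust)
  then show "x \<otimes>\<^bsub>dihedral a\<^esub> y \<otimes>\<^bsub>dihedral a\<^esub> z = x \<otimes>\<^bsub>dihedral a\<^esub> (y \<otimes>\<^bsub>dihedral a\<^esub> z)"
    by (cases s; cases t) (simp_all add: mod_simps algebra_simps)
next
  fix x
  assume x: "x \<in> carrier (dihedral a)"
  obtain i s where i: "x = (i, s)" by force
  show "\<exists>y\<in>carrier (dihedral a). y \<otimes>\<^bsub>dihedral a\<^esub> x = \<one>\<^bsub>dihedral a\<^esub>"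
  proof (cases s)
    case True
    then show ?thesis
      using x by (intro bexI[of _ "(i, True)"]) (auto simp: i carrier_dihedral one_dihedral)
  next
    case False
    then show ?thesis
      using x assms by (intro bexI[of _ "((- i) mod int a, False)"])
        (auto simp: i carrier_dihedral one_dihedral mod_simps)
  qed
qed (use assms in \<open>auto simp: carrier_dihedral one_dihedral\<close>)

context
  fixes a :: nat
  assumes a: "0 < a"
begin

interpretation D: group "dihedral a"
  by (rule group_dihedral[OF a])

lemma inv_dihedral:
  assumes "(i, s) \<in> carrier (dihedral a)"
  shows "inv\<^bsub>dihedral a\<^esub> (i, s) = (if s then (i, s) else ((- i) mod int a, s))"
proof (rule D.inv_equality)
  show "(if s then (i, s) else ((- i) mod int a, s)) \<otimes>\<^bsub>dihedral a\<^esub> (i, s) = \<one>\<^bsub>dihedral a\<^esub>"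
    by (simp add: one_dihedral mod_add_left_eq)
qed (use assms a in \<open>auto simp: carrier_dihedral\<close>)

lemma nat_pow_dihedral_rotation:
  "(k, False) [^]\<^bsub>dihedral a\<^esub> (j::nat) = ((int j * k) mod int a, False)"
proof (induction j)
  case (Suc j)
  have "(k, False) [^]\<^bsub>dihedral a\<^esub> Suc j = ((int j * k) mod int a, False) \<otimes>\<^bsub>dihedral a\<^esub> (k, False)"
    using Suc.IH by simp
  also have "\<dots> = ((int (Suc j) * k) mod int a, False)"
    by (simp add: mod_simps distrib_right add.commute)
  finally show ?case .
qed (simp add: one_dihedral)

lemma int_pow_dihedral_rotation:
  assumes "(k, False) \<in> carrier (dihedral a)"
  shows "(k, False) [^]\<^bsub>dihedral a\<^esub> (z::int) = ((z * k) mod int a, False)"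
proof (cases "0 \<le> z")
  case True
  then show ?thesis
    using nat_pow_dihedral_rotation[of k "nat z"] pow_nat[OF True, of "dihedral a" "(k, False)"] by simp
next
  case False
  then have "(k, False) [^]\<^bsub>dihedral a\<^esub> z = inv\<^bsub>dihedral a\<^esub> ((k, False) [^]\<^bsub>dihedral a\<^esub> (- z))"
    using assms D.int_pow_neg[of "(k, False)" "- z"] by simp
  also have "\<dots> = inv\<^bsub>dihedral a\<^esub> ((- z * k) mod int a, False)"
    using False nat_pow_dihedral_rotation[of k "nat (- z)"] pow_nat[of "- z" "dihedral a" "(k, False)"] by simp
  also have "\<dots> = ((z * k) mod int a, False)"
    using a by (simp add: inv_dihedral carrier_dihedral mod_minus_eq)
  finally show ?thesis .
qed

lemma nat_pow_dihedral_reflection: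
  assumes "(k, True) \<in> carrier (dihedral a)"
  shows "(k, True) [^]\<^bsub>dihedral a\<^esub> (j::nat) = (if even j then (0, False) else (k, True))"
  using assms by (induction j) (auto simp: one_dihedral carrier_dihedral)

lemma subgroup_dihedral_rotations: "subgroup ({0..<int a} \<times> {False}) (dihedral a)"
  by (rule D.subgroupI) (use a in \<open>auto simp: carrier_dihedral inv_dihedral\<close>)

lemma subgroup_dihedral_mod:
  assumes d: "d dvd int a"
  shows "subgroup {(i, s) \<in> carrier (dihedral a). d dvd i - (if s then c else 0)} (dihedral a)"
proof (rule D.subgroupI)
  fix x
  assume x: "x \<in> {(i, s) \<in> carrier (dihedral a). d dvd i - (if s then c else 0)}"
  obtain i s where "x = (i, s)" by force
  with x d a
  show "inv\<^bsub>dihedral a\<^esub> x \<in> {(i, s) \<in> carrier (dihedral a). d dvd i - (if s then c else 0)}"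
    by (cases s) (auto simp: inv_dihedral carrier_dihedral dvd_mod_diff_iff)
next
  fix x y
  assume x: "x \<in> {(i, s) \<in> carrier (dihedral a). d dvd i - (if s then c else 0)}"
    and y: "y \<in> {(i, s) \<in> carrier (dihedral a). d dvd i - (if s then c else 0)}"
  obtain i s j t where xy: "x = (i, s)" "y = (j, t)" by force
  have "(if s then i - j else i + j) - (if s \<noteq> t then c else 0)
      = (i - (if s then c else 0)) + (if s then -1 else 1) * (j - (if t then c else 0))"
    by (cases s; cases t) simp_all
  moreover have "d dvd (i - (if s then c else 0)) + (if s then -1 else 1) * (j - (if t then c else 0))"
    using x y xy by (simp add: dvd_add)
  ultimately show "x \<otimes>\<^bsub>dihedral a\<^esub> y \<in> {(i, s) \<in> carrier (dihedral a). d dvd i - (if s then c else 0)}"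
    using xy d a by (simp add: carrier_dihedral dvd_mod_diff_iff)
next
  have "(0, False) \<in> {(i, s) \<in> carrier (dihedral a). d dvd i - (if s then c else 0)}"
    using a by (simp add: carrier_dihedral)
  then show "{(i, s) \<in> carrier (dihedral a). d dvd i - (if s then c else 0)} \<noteq> {}"
    by blast
qed (auto simp: carrier_dihedral)

lemma generating_pair_dihedral:
  fixes m :: nat
  assumes "odd m" and U: "U \<in> carrier (dihedral a)" and V: "V \<in> carrier (dihedral a)"
    and U_order: "U [^]\<^bsub>dihedral a\<^esub> m = \<one>\<^bsub>dihedral a\<^esub>"
    and rotation: "(1, False) \<in> generate (dihedral a) {U, V}"
    and reflection: "(0, True) \<in> generate (dihedral a) {U, V}"
  obtains k c where "U = (k, False)" and "V = (c, True)" and "coprime (int a) k"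
proof -
  obtain k s c t where UV: "U = (k, s)" "V = (c, t)" by force
  have "\<not> s"
  proof
    assume s
    then have "U [^]\<^bsub>dihedral a\<^esub> m = U"
      using U \<open>odd m\<close> by (simp add: UV nat_pow_dihedral_reflection)
    with U_order show False by (simp add: UV one_dihedral \<open>s\<close>)
  qed
  have t
  proof (rule ccontr)
    assume "\<not> t"
    then have "{U, V} \<subseteq> {0..<int a} \<times> {False}"
      using U V by (auto simp: UV carrier_dihedral \<open>\<not> s\<close>)
    from D.generate_subgroup_incl[OF this subgroup_dihedral_rotations] reflection
    show False by auto
  qed
  \<comment> \<open>The elements \<open>\<rho>\<^sup>i \<sigma>\<^sup>s\<close> with \<open>i \<equiv> s c (mod d)\<close> form a subgroup containing \<open>U\<close> and \<open>V\<close>, hence \<open>\<rho>\<close>.\<close>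
  define d where "d = gcd k (int a)"
  have "{U, V} \<subseteq> {(i, s) \<in> carrier (dihedral a). d dvd i - (if s then c else 0)}"
    using U V by (auto simp: UV \<open>\<not> s\<close> \<open>t\<close> d_def)
  from D.generate_subgroup_incl[OF this subgroup_dihedral_mod] rotation
  have "d dvd 1" by (auto simp: d_def)
  then have "coprime (int a) k"
    by (simp add: d_def coprime_iff_gcd_eq_1 gcd.commute is_unit_gcd)
  with that show thesis
    by (simp add: UV \<open>\<not> s\<close> \<open>t\<close>)
qed

lemma metacyclic_pair_dihedral_conditions:
  fixes m :: nat
  assumes "odd m" and U: "U \<in> carrier (dihedral a)" and V: "V \<in> carrier (dihedral a)"
    and U_order: "U [^]\<^bsub>dihedral a\<^esub> m = \<one>\<^bsub>dihedral a\<^esub>"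
    and conj: "V \<otimes>\<^bsub>dihedral a\<^esub> U \<otimes>\<^bsub>dihedral a\<^esub> inv\<^bsub>dihedral a\<^esub> V = U [^]\<^bsub>dihedral a\<^esub> r"
    and "(1, False) \<in> generate (dihedral a) {U, V}"
    and "(0, True) \<in> generate (dihedral a) {U, V}"
  shows "a dvd m \<and> [r = - 1] (mod int a)"
proof -
  obtain k c where UV: "U = (k, False)" "V = (c, True)" and coprime: "coprime (int a) k"
    using generating_pair_dihedral[OF assms(1-4) assms(6,7)] .
  have "((int m * k) mod int a, False) = (0, False)"
    using U_order by (simp add: UV nat_pow_dihedral_rotation one_dihedral)
  then have "int a dvd int m * k"
    by (simp add: mod_eq_0_iff_dvd)
  with coprime have "a dvd m"
    by (simp add: coprime_dvd_mult_left_iff)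
  have "V \<otimes>\<^bsub>dihedral a\<^esub> U \<otimes>\<^bsub>dihedral a\<^esub> inv\<^bsub>dihedral a\<^esub> V = ((- k) mod int a, False)"
    using V by (simp add: UV inv_dihedral mod_diff_left_eq)
  with conj have "(- k) mod int a = (r * k) mod int a"
    using U by (simp add: UV int_pow_dihedral_rotation)
  then have "int a dvd - ((r + 1) * k)"
    by (simp add: mod_eq_dvd_iff algebra_simps)
  then have "int a dvd (r + 1) * k"
    by (simp only: dvd_minus_iff)
  with coprime have "[r = - 1] (mod int a)"
    by (simp add: coprime_dvd_mult_left_iff cong_iff_dvd_diff)
  with \<open>a dvd m\<close> show ?thesis ..
qed

end

lemma hom_Q_group_dihedral:
  assumes "2 \<le> a"
  obtains \<chi> where "\<chi> \<in> hom (Q_group a) (dihedral a)"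
    and "\<chi> (pres_gen (Q_rels a) Gen1) = (1, False)" and "\<chi> (pres_gen (Q_rels a) Gen2) = (0, True)"
proof -
  have a: "0 < a" using assms by simp
  interpret D: group "dihedral a" by (rule group_dihedral[OF a])
  have rho: "(1, False) \<in> carrier (dihedral a)" and sigma: "(0, True) \<in> carrier (dihedral a)"
    using assms by (simp_all add: carrier_dihedral)
  have "(1, False) [^]\<^bsub>dihedral a\<^esub> a = (0, True) [^]\<^bsub>dihedral a\<^esub> (2::nat)"
    using a sigma by (simp add: nat_pow_dihedral_rotation nat_pow_dihedral_reflection)
  moreover have "(0, True) \<otimes>\<^bsub>dihedral a\<^esub> (1, False) \<otimes>\<^bsub>dihedral a\<^esub> inv\<^bsub>dihedral a\<^esub> (0, True)
      = inv\<^bsub>dihedral a\<^esub> (1, False)"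
    using a rho sigma by (simp add: inv_dihedral)
  ultimately show thesis
    using that by (rule hom_from_Q_group[OF D.is_group rho sigma])
qed

lemma onto_Q_group_imp_conditions:
  assumes "odd m" and "2 \<le> a"
    and \<theta>: "\<theta> \<in> hom (G_group m n r) (Q_group a)"
    and onto: "\<theta> ` carrier (G_group m n r) = carrier (Q_group a)"
  shows "a dvd m \<and> [r = - 1] (mod int a)"
proof -
  have a: "0 < a" using \<open>2 \<le> a\<close> by simp
  interpret D: group "dihedral a" by (rule group_dihedral[OF a])
  obtain \<chi> where \<chi>: "\<chi> \<in> hom (Q_group a) (dihedral a)"
    and \<chi>_gens: "\<chi> (pres_gen (Q_rels a) Gen1) = (1, False)" "\<chi> (pres_gen (Q_rels a) Gen2) = (0, True)"
    using hom_Q_group_dihedral[OF \<open>2 \<le> a\<close>] .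
  define \<psi> where "\<psi> = \<chi> \<circ> \<theta>"
  have \<psi>: "\<psi> \<in> hom (G_group m n r) (dihedral a)"
    unfolding \<psi>_def using \<theta> \<chi> by (rule Group.hom_compose)
  have "pres_gen (Q_rels a) g \<in> carrier (Q_group a)" for g
    by (simp add: Q_group_presentation carrier_presented_group)
  then have "(1, False) \<in> \<chi> ` carrier (Q_group a)" "(0, True) \<in> \<chi> ` carrier (Q_group a)"
    using \<chi>_gens by (metis image_eqI)+
  moreover have "\<psi> ` carrier (G_group m n r) = \<chi> ` carrier (Q_group a)"
    unfolding \<psi>_def image_comp[symmetric] onto ..
  moreover have "\<psi> ` carrier (G_group m n r)
      = generate (dihedral a) {\<psi> (pres_gen (G_rels m n r) Gen1), \<psi> (pres_gen (G_rels m n r) Gen2)}"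
    using hom_image_presented_group[OF D.is_group \<psi>[unfolded G_group_presentation]]
    by (simp add: G_group_presentation range_gen2)
  moreover have "\<psi> (pres_gen (G_rels m n r) g) \<in> carrier (dihedral a)" for g
    using \<psi> by (auto simp: G_group_presentation carrier_presented_group intro: hom_in_carrier)
  ultimately show ?thesis
    using metacyclic_pair_dihedral_conditions[OF a \<open>odd m\<close> _ _ hom_G_group_relations[OF D.is_group \<psi>]]
    by simp
qed

theorem lemma1p6:
  fixes m n a :: nat and r :: int
  assumes "m \<ge> 1" and "odd m" and "n \<ge> 1" and "gcd m (4 * n) = 1"
    and "[r ^ (4 * n) = 1] (mod int m)"
    and "a \<ge> 2"
  shows "(\<exists>N. N \<lhd> G_group m n r \<and> G_group m n r Mod N \<cong> Q_group a)
         \<longleftrightarrow> (a dvd m \<and> [r = -1] (mod int a))"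
proof -
  interpret G: group "G_group m n r"
    by (simp add: G_group_presentation group_presented_group)
  have "group (Q_group a)"
    by (simp add: Q_group_presentation group_presented_group)
  then have "(\<exists>N. N \<lhd> G_group m n r \<and> G_group m n r Mod N \<cong> Q_group a)
      \<longleftrightarrow> (\<exists>h \<in> hom (G_group m n r) (Q_group a). h ` carrier (G_group m n r) = carrier (Q_group a))"
    by (rule G.quotient_iso_iff_onto_hom)
  also have "\<dots> \<longleftrightarrow> a dvd m \<and> [r = -1] (mod int a)"
  proof
    assume "\<exists>h \<in> hom (G_group m n r) (Q_group a). h ` carrier (G_group m n r) = carrier (Q_group a)"
    then obtain h where "h \<in> hom (G_group m n r) (Q_group a)"
      and "h ` carrier (G_group m n r) = carrier (Q_group a)" ..
    then show "a dvd m \<and> [r = -1] (mod int a)"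
      by (rule onto_Q_group_imp_conditions[OF \<open>odd m\<close> \<open>a \<ge> 2\<close>])
  next
    assume "a dvd m \<and> [r = -1] (mod int a)"
    then show "\<exists>h \<in> hom (G_group m n r) (Q_group a). h ` carrier (G_group m n r) = carrier (Q_group a)"
      using G_group_onto_Q_group[OF \<open>odd m\<close>] by blast
  qed
  finally show ?thesis .
qed

end
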